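(* For integers $k\ge1$ let $p_k=\int_{\mathbb R}\mathrm{sech}^k(x)\cos(x)\,dx$ and $q_k=\int_{\mathbb R}\mathrm{sech}^k(x)\log(\mathrm{sech}(x))\cos(x)\,dx$. Then \[ q_3=q_1-\tfrac12p_1,\qquad q_5=\tfrac56q_1-\tfrac{29}{72}p_1,\qquad q_7=\tfrac{13}{18}q_1-\tfrac{121}{360}p_1 . \] *)

theory Defs
  imports "HOL-Analysis.Analysis"
begin

definition sech :: "real \<Rightarrow> real" where
  "sech x = 1 / cosh x"

definition p_int :: "nat \<Rightarrow> real" where
  "p_int k = (LBINT x. sech x ^ k * cos x)"

definition q_int :: "nat \<Rightarrow> real" where
  "q_int k = (LBINT x. sech x ^ k * ln (sech x) * cos x)"

end

(*
  With s = sech and t = tanh one has s' = -s t, t' = s^2 and t^2 = 1 - s^2, so the second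
  derivatives of s^k and of s^k ln s are linear combinations of s^k, s^(k+2), s^k ln s and
  s^(k+2) ln s.  Integrating f'' cos by parts twice gives minus the integral of f cos; all the
  functions involved are dominated by a multiple of 1/(1 + x^2), which makes them integrable
  and kills the boundary terms.  This yields two-step recurrences for p_k and q_k, and the
  claimed identities are their instances k = 1, 3, 5.
*)

theory Submission
  imports Defs "HOL-Probability.Sinc_Integral"
begin

definition decays_quadratically :: "(real \<Rightarrow> real) \<Rightarrow> bool" where
  "decays_quadratically f \<longleftrightarrow> (\<exists>c. \<forall>x. \<bar>f x\<bar> \<le> c / (1 + x\<^sup>2))"

lemma decays_quadraticallyI: "(\<And>x. \<bar>f x\<bar> \<le> c / (1 + x\<^sup>2)) \<Longrightarrow> decays_quadratically f"
  unfolding decays_quadratically_def by blast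

lemma decays_quadratically_add:
  assumes "decays_quadratically f" "decays_quadratically g"
  shows "decays_quadratically (\<lambda>x. f x + g x)"
proof -
  obtain a b where a: "\<And>x. \<bar>f x\<bar> \<le> a / (1 + x\<^sup>2)" and b: "\<And>x. \<bar>g x\<bar> \<le> b / (1 + x\<^sup>2)"
    using assms unfolding decays_quadratically_def by blast
  have "\<bar>f x + g x\<bar> \<le> (a + b) / (1 + x\<^sup>2)" for x
  proof -
    have "\<bar>f x + g x\<bar> \<le> \<bar>f x\<bar> + \<bar>g x\<bar>"
      by (rule abs_triangle_ineq)
    also have "\<dots> \<le> a / (1 + x\<^sup>2) + b / (1 + x\<^sup>2)"
      using a b by (rule add_mono)
    finally show ?thesis
      by (simp add: add_divide_distrib)
  qed
  then show ?thesis
    by (rule decays_quadraticallyI)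
qed

lemma decays_quadratically_mult_bounded:
  assumes "decays_quadratically f" and "\<And>x. \<bar>g x\<bar> \<le> B"
  shows "decays_quadratically (\<lambda>x. g x * f x)" "decays_quadratically (\<lambda>x. f x * g x)"
proof -
  obtain c where c: "\<And>x. \<bar>f x\<bar> \<le> c / (1 + x\<^sup>2)"
    using assms(1) unfolding decays_quadratically_def by blast
  have "\<bar>g x * f x\<bar> \<le> (B * c) / (1 + x\<^sup>2)" for x
  proof -
    have "\<bar>g x\<bar> * \<bar>f x\<bar> \<le> B * (c / (1 + x\<^sup>2))"
      by (rule mult_mono[OF assms(2) c]) (use assms(2)[of x] in auto)
    then show ?thesis
      by (simp add: abs_mult)
  qed
  then show "decays_quadratically (\<lambda>x. g x * f x)" "decays_quadratically (\<lambda>x. f x * g x)"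
    by (auto intro: decays_quadraticallyI simp: mult.commute)
qed

lemma decays_quadratically_cmult: "decays_quadratically f \<Longrightarrow> decays_quadratically (\<lambda>x. c * f x)"
  by (rule decays_quadratically_mult_bounded(1)[where B = "\<bar>c\<bar>"]) auto

lemma decays_quadratically_minus: "decays_quadratically f \<Longrightarrow> decays_quadratically (\<lambda>x. - f x)"
  using decays_quadratically_cmult[of f "-1"] by simp

lemma decays_quadratically_diff:
  "decays_quadratically f \<Longrightarrow> decays_quadratically g \<Longrightarrow> decays_quadratically (\<lambda>x. f x - g x)"
  using decays_quadratically_add[of f "\<lambda>x. - g x"] decays_quadratically_minus[of g] by simp

lemma decays_quadratically_tendsto_0:
  assumes "decays_quadratically f"
  shows "(f \<longlongrightarrow> 0) at_top" "(f \<longlongrightarrow> 0) at_bot"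
proof -
  obtain c where c: "\<And>x. \<bar>f x\<bar> \<le> c / (1 + x\<^sup>2)"
    using assms unfolding decays_quadratically_def by blast
  have "(f \<longlongrightarrow> 0) F" if "filterlim (\<lambda>x::real. 1 + x\<^sup>2) at_top F" for F
  proof (rule Lim_null_comparison[OF always_eventually])
    show "\<forall>x. norm (f x) \<le> c / (1 + x\<^sup>2)"
      using c by simp
    show "((\<lambda>x. c / (1 + x\<^sup>2)) \<longlongrightarrow> 0) F"
      using tendsto_mult[OF tendsto_const[of c] tendsto_inverse_0_at_top[OF that]]
      by (simp add: divide_inverse)
  qed
  moreover have "filterlim (\<lambda>x::real. 1 + x\<^sup>2) at_top at_top"
    by (intro filterlim_tendsto_add_at_top[OF tendsto_const] filterlim_pow_at_top filterlim_ident) auto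
  moreover have "filterlim (\<lambda>x::real. 1 + x\<^sup>2) at_top at_bot"
    by (intro filterlim_tendsto_add_at_top[OF tendsto_const] filterlim_pow_at_bot_even filterlim_ident) auto
  ultimately show "(f \<longlongrightarrow> 0) at_top" "(f \<longlongrightarrow> 0) at_bot"
    by blast+
qed

lemma decays_quadratically_integrable:
  assumes "decays_quadratically f" and "continuous_on UNIV f"
  shows "integrable lborel f"
proof -
  obtain c where c: "\<And>x. \<bar>f x\<bar> \<le> c / (1 + x\<^sup>2)"
    using assms(1) unfolding decays_quadratically_def by blast
  have "0 \<le> c"
    using c[of 0] by simp
  have "integrable lborel (\<lambda>x::real. c * inverse (1 + x\<^sup>2))"
    using integrable_inverse_1_plus_square by (simp add: set_integrable_def)
  then show ?thesis
  proof (rule Bochner_Integration.integrable_bound)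
    show "f \<in> borel_measurable lborel"
      using assms(2) by (simp add: borel_measurable_continuous_onI)
    show "AE x in lborel. norm (f x) \<le> norm (c * inverse (1 + x\<^sup>2))"
      using c \<open>0 \<le> c\<close> by (simp add: abs_mult divide_inverse add_pos_nonneg)
  qed
qed

lemma integrable_times_cos:
  assumes "decays_quadratically g" and "continuous_on UNIV g"
  shows "integrable lborel (\<lambda>x. g x * cos x)"
proof (rule decays_quadratically_integrable)
  show "decays_quadratically (\<lambda>x. g x * cos x)"
    using assms(1) abs_cos_le_one by (rule decays_quadratically_mult_bounded(2))
  show "continuous_on UNIV (\<lambda>x. g x * cos x)"
    using assms(2) by (intro continuous_intros)
qed

lemma integral_derivative_eq_0_at_infinity:
  fixes F f :: "real \<Rightarrow> real"
  assumes "\<And>x. (F has_real_derivative f x) (at x)" and "\<And>x. isCont f x"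
    and "integrable lborel f" and "(F \<longlongrightarrow> 0) at_top" and "(F \<longlongrightarrow> 0) at_bot"
  shows "(LBINT x. f x) = 0"
proof -
  have "(LBINT x=-\<infinity>..\<infinity>. f x) = 0 - 0"
    by (rule interval_integral_FTC_integrable[where F = F])
      (use assms in \<open>auto simp: has_real_derivative_iff_has_vector_derivative[symmetric]
        set_integrable_def ereal_tendsto_simps1\<close>)
  then show ?thesis
    by (simp add: interval_lebesgue_integral_def set_lebesgue_integral_def)
qed

lemma integral_second_derivative_times_cos:
  fixes f f' f'' :: "real \<Rightarrow> real"
  assumes f': "\<And>x. (f has_real_derivative f' x) (at x)"
    and f'': "\<And>x. (f' has_real_derivative f'' x) (at x)"
    and cont: "continuous_on UNIV f''"
    and decay: "decays_quadratically f" "decays_quadratically f'" "decays_quadratically f''"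
  shows "(LBINT x. f'' x * cos x) = - (LBINT x. f x * cos x)"
proof -
  have isCont_f: "isCont f x" and isCont_f'': "isCont f'' x" for x
    using DERIV_isCont[OF f'] cont by (simp_all add: continuous_on_eq_continuous_at)
  then have "continuous_on UNIV f"
    by (simp add: continuous_at_imp_continuous_on)
  have int: "integrable lborel (\<lambda>x. f x * cos x)" "integrable lborel (\<lambda>x. f'' x * cos x)"
    using decay \<open>continuous_on UNIV f\<close> cont by (simp_all add: integrable_times_cos)
  have "(LBINT x. f'' x * cos x + f x * cos x) = 0"
  proof (rule integral_derivative_eq_0_at_infinity)
    show "((\<lambda>x. f' x * cos x + f x * sin x) has_real_derivative f'' x * cos x + f x * cos x) (at x)"
      for x
      by (auto intro!: derivative_eq_intros f' f'' simp: algebra_simps)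
    show "isCont (\<lambda>x. f'' x * cos x + f x * cos x) x" for x
      by (intro continuous_intros isCont_f isCont_f'')
    show "integrable lborel (\<lambda>x. f'' x * cos x + f x * cos x)"
      using int by simp
    have "decays_quadratically (\<lambda>x. f' x * cos x + f x * sin x)"
      using decay by (auto intro!: decays_quadratically_add decays_quadratically_mult_bounded
          abs_cos_le_one abs_sin_le_one)
    then show "((\<lambda>x. f' x * cos x + f x * sin x) \<longlongrightarrow> 0) at_top"
      "((\<lambda>x. f' x * cos x + f x * sin x) \<longlongrightarrow> 0) at_bot"
      by (rule decays_quadratically_tendsto_0)+
  qed
  then show ?thesis
    using int by simp
qed

lemma sech_pos [simp]: "0 < sech x"
  by (simp add: sech_def)

lemma sech_nonzero [simp]: "sech x \<noteq> 0"
  by (simp add: sech_def)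

lemma abs_sech [simp]: "\<bar>sech x\<bar> = sech x"
  by (simp add: less_imp_le)

lemma sech_le_one: "sech x \<le> 1"
  using cosh_real_ge_1[of x] by (simp add: sech_def)

lemma abs_sech_power_le_one: "\<bar>sech x ^ k\<bar> \<le> 1"
proof -
  have "sech x ^ k \<le> 1"
    by (rule power_le_one) (simp_all add: less_imp_le sech_le_one)
  then show ?thesis
    by (simp add: power_abs)
qed

lemma ln_sech: "ln (sech x) = - ln (cosh x)"
  by (simp add: sech_def ln_div)

lemma tanh_square: "tanh x ^ 2 = 1 - sech x ^ 2"
proof -
  have "sinh x ^ 2 + 1 = cosh x ^ 2"
    by (simp add: cosh_square_eq)
  then show ?thesis
    by (simp add: tanh_def sech_def field_simps)
qed

lemma abs_tanh_le_one: "\<bar>tanh x\<bar> \<le> (1::real)"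
  using tanh_real_bounds[of x] by auto

lemma continuous_on_sech [continuous_intros]:
  "continuous_on A f \<Longrightarrow> continuous_on A (\<lambda>x. sech (f x))"
  unfolding sech_def by (intro continuous_on_divide continuous_on_const continuous_on_cosh) auto

lemma has_real_derivative_sech [THEN DERIV_chain2, derivative_intros]:
  "(sech has_real_derivative - sech x * tanh x) (at x)"
  unfolding sech_def[abs_def] tanh_def
  by (auto intro!: derivative_eq_intros simp: power2_eq_square field_simps)

lemma has_real_derivative_sech_power:
  "((\<lambda>x. sech x ^ k) has_real_derivative - (real k * sech x ^ k * tanh x)) (at x)"
proof (rule DERIV_cong)
  show "((\<lambda>x. sech x ^ k) has_real_derivative
      real k * ((- sech x * tanh x) * sech x ^ (k - 1))) (at x)"
    by (auto intro!: derivative_eq_intros)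
  show "real k * ((- sech x * tanh x) * sech x ^ (k - 1)) = - (real k * sech x ^ k * tanh x)"
    by (cases k) (simp_all add: algebra_simps)
qed

lemma has_real_derivative_ln_sech: "((\<lambda>x. ln (sech x)) has_real_derivative - tanh x) (at x)"
  by (auto intro!: derivative_eq_intros)

lemma has_real_derivative_tanh: "(tanh has_real_derivative sech x ^ 2) (at x)"
  by (auto intro!: derivative_eq_intros simp: tanh_square)

lemma sech_times_one_plus_ln_cosh_le: "sech x * (1 + ln (cosh x)) \<le> 54 / (1 + x\<^sup>2)"
proof -
  define y where "y = \<bar>x\<bar>"
  have "0 \<le> y"
    by (simp add: y_def)
  have "cosh x = cosh y"
    by (simp add: y_def)
  then have two_cosh: "2 * cosh x = exp y + exp (- y)"
    by (simp add: cosh_def)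
  moreover have "exp (- y) \<le> exp y"
    using \<open>0 \<le> y\<close> by simp
  ultimately have "cosh x \<le> exp y"
    by linarith
  then have "ln (cosh x) \<le> y"
    using ln_le_cancel_iff[of "cosh x" "exp y"] by simp
  moreover have "0 \<le> ln (cosh x)"
    using cosh_real_ge_1[of x] by simp
  ultimately have "(1 + ln (cosh x)) * (1 + x\<^sup>2) \<le> (1 + y) * (1 + y\<^sup>2)"
    by (intro mult_mono) (auto simp: y_def)
  also have "\<dots> \<le> 27 + 27 * y + 9 * y\<^sup>2 + y ^ 3"
    using \<open>0 \<le> y\<close> by (simp add: algebra_simps power2_eq_square power3_eq_cube)
  also have "\<dots> = 27 * (1 + y / 3) ^ 3"
    by (simp add: field_simps power2_eq_square power3_eq_cube)
  also have "\<dots> \<le> 27 * exp y"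
    using exp_ge_one_plus_x_over_n_power_n[of 3 y] \<open>0 \<le> y\<close> by simp
  also have "\<dots> \<le> 54 * cosh x"
    using two_cosh exp_gt_zero[of "- y"] by linarith
  finally have "(1 + ln (cosh x)) * (1 + x\<^sup>2) \<le> 54 * cosh x" .
  moreover have "0 < 1 + x\<^sup>2"
    by (simp add: add_pos_nonneg)
  ultimately show ?thesis
    by (simp add: sech_def field_simps)
qed

lemma decays_quadratically_sech: "decays_quadratically sech"
proof (rule decays_quadraticallyI)
  fix x :: real
  have "0 \<le> sech x * ln (cosh x)"
    using cosh_real_ge_1[of x] by (simp add: less_imp_le)
  then have "\<bar>sech x\<bar> \<le> sech x * (1 + ln (cosh x))"
    by (simp add: distrib_left)
  then show "\<bar>sech x\<bar> \<le> 54 / (1 + x\<^sup>2)"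
    using sech_times_one_plus_ln_cosh_le[of x] by linarith
qed

lemma decays_quadratically_sech_ln_sech: "decays_quadratically (\<lambda>x. sech x * ln (sech x))"
proof (rule decays_quadraticallyI)
  fix x :: real
  have "\<bar>sech x * ln (sech x)\<bar> = sech x * ln (cosh x)"
    using cosh_real_ge_1[of x] by (simp add: ln_sech abs_mult)
  then have "\<bar>sech x * ln (sech x)\<bar> \<le> sech x * (1 + ln (cosh x))"
    by (simp add: distrib_left less_imp_le)
  then show "\<bar>sech x * ln (sech x)\<bar> \<le> 54 / (1 + x\<^sup>2)"
    using sech_times_one_plus_ln_cosh_le[of x] by linarith
qed

lemma decays_quadratically_sech_power:
  assumes "k \<ge> 1"
  shows "decays_quadratically (\<lambda>x. sech x ^ k)"
    and "decays_quadratically (\<lambda>x. sech x ^ k * ln (sech x))"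
proof -
  obtain m where "k = Suc m"
    using assms by (cases k) auto
  then have "(\<lambda>x. sech x ^ k) = (\<lambda>x. sech x ^ m * sech x)"
    and "(\<lambda>x. sech x ^ k * ln (sech x)) = (\<lambda>x. sech x ^ m * (sech x * ln (sech x)))"
    by (simp_all add: fun_eq_iff mult.assoc)
  then show "decays_quadratically (\<lambda>x. sech x ^ k)"
    and "decays_quadratically (\<lambda>x. sech x ^ k * ln (sech x))"
    using decays_quadratically_mult_bounded(1)[OF _ abs_sech_power_le_one]
      decays_quadratically_sech decays_quadratically_sech_ln_sech by simp_all
qed

lemma integrable_sech_power_cos:
  assumes "k \<ge> 1"
  shows "integrable lborel (\<lambda>x. sech x ^ k * cos x)"
    and "integrable lborel (\<lambda>x. sech x ^ k * ln (sech x) * cos x)"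
  using decays_quadratically_sech_power[OF assms]
  by (intro integrable_times_cos continuous_intros; simp)+

lemma p_int_recurrence:
  assumes "k \<ge> 1"
  shows "(real k ^ 2 + 1) * p_int k = real k * (real k + 1) * p_int (k + 2)"
proof -
  define f' where "f' x = - (real k * sech x ^ k * tanh x)" for x
  define f'' where "f'' x = real k ^ 2 * sech x ^ k - real k * (real k + 1) * sech x ^ (k + 2)"
    for x
  have "(LBINT x. f'' x * cos x) = - (LBINT x. sech x ^ k * cos x)"
  proof (rule integral_second_derivative_times_cos)
    show "((\<lambda>x. sech x ^ k) has_real_derivative f' x) (at x)" for x
      unfolding f'_def by (rule has_real_derivative_sech_power)
    show "(f' has_real_derivative f'' x) (at x)" for x
    proof (rule DERIV_cong)
      show "(f' has_real_derivative - (real k * (- (real k * sech x ^ k * tanh x)) * tanh x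
          + sech x ^ 2 * (real k * sech x ^ k))) (at x)"
        unfolding f'_def[abs_def]
        by (intro DERIV_minus DERIV_mult DERIV_cmult has_real_derivative_sech_power
            has_real_derivative_tanh)
      have "- (real k * (- (real k * sech x ^ k * tanh x)) * tanh x
          + sech x ^ 2 * (real k * sech x ^ k))
          = real k ^ 2 * sech x ^ k * tanh x ^ 2 - real k * sech x ^ k * sech x ^ 2"
        by algebra
      also have "\<dots> = f'' x"
        unfolding tanh_square f''_def power_add by algebra
      finally show "- (real k * (- (real k * sech x ^ k * tanh x)) * tanh x
          + sech x ^ 2 * (real k * sech x ^ k)) = f'' x" .
    qed
    show "continuous_on UNIV f''"
      unfolding f''_def[abs_def] by (intro continuous_intros)
    show "decays_quadratically (\<lambda>x. sech x ^ k)" "decays_quadratically f'"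
      "decays_quadratically f''"
      unfolding f'_def[abs_def] f''_def[abs_def] using assms
      by (intro decays_quadratically_minus decays_quadratically_diff decays_quadratically_cmult
          decays_quadratically_mult_bounded(2)[OF _ abs_tanh_le_one]
          decays_quadratically_sech_power; simp)+
  qed
  moreover have "(LBINT x. f'' x * cos x) = real k ^ 2 * p_int k - real k * (real k + 1) * p_int (k + 2)"
  proof -
    have "(\<lambda>x. f'' x * cos x) = (\<lambda>x. real k ^ 2 * (sech x ^ k * cos x)
        - real k * (real k + 1) * (sech x ^ (k + 2) * cos x))"
      by (simp add: f''_def fun_eq_iff algebra_simps)
    then show ?thesis
      using integrable_sech_power_cos(1)[of k] integrable_sech_power_cos(1)[of "k + 2"] assms
      by (simp add: p_int_def)
  qed
  ultimately show ?thesis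
    by (simp add: p_int_def algebra_simps)
qed

lemma q_int_recurrence:
  assumes "k \<ge> 1"
  shows "(real k ^ 2 + 1) * q_int k + 2 * real k * p_int k
    = real k * (real k + 1) * q_int (k + 2) + (2 * real k + 1) * p_int (k + 2)"
proof -
  define f' where "f' x = - (tanh x * (real k * (sech x ^ k * ln (sech x)) + sech x ^ k))" for x
  define f'' where "f'' x = real k ^ 2 * (sech x ^ k * ln (sech x))
    - real k * (real k + 1) * (sech x ^ (k + 2) * ln (sech x))
    + 2 * real k * sech x ^ k - (2 * real k + 1) * sech x ^ (k + 2)" for x
  have "(LBINT x. f'' x * cos x) = - (LBINT x. sech x ^ k * ln (sech x) * cos x)"
  proof (rule integral_second_derivative_times_cos)
    show "((\<lambda>x. sech x ^ k * ln (sech x)) has_real_derivative f' x) (at x)" for x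
    proof (rule DERIV_cong)
      show "((\<lambda>x. sech x ^ k * ln (sech x)) has_real_derivative
          - (real k * sech x ^ k * tanh x) * ln (sech x) + - tanh x * sech x ^ k) (at x)"
        by (intro DERIV_mult has_real_derivative_sech_power has_real_derivative_ln_sech)
      show "- (real k * sech x ^ k * tanh x) * ln (sech x) + - tanh x * sech x ^ k = f' x"
        unfolding f'_def by algebra
    qed
    show "(f' has_real_derivative f'' x) (at x)" for x
    proof -
      have "(f' has_real_derivative
          - (sech x ^ 2 * (real k * (sech x ^ k * ln (sech x)) + sech x ^ k)
            + (real k * (- (real k * sech x ^ k * tanh x) * ln (sech x) + - tanh x * sech x ^ k)
               + - (real k * sech x ^ k * tanh x)) * tanh x)) (at x)"
        (is "(_ has_real_derivative ?D) _")
        unfolding f'_def[abs_def]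
        by (intro DERIV_minus DERIV_mult DERIV_add DERIV_cmult has_real_derivative_sech_power
            has_real_derivative_ln_sech has_real_derivative_tanh)
      moreover have "?D = tanh x ^ 2 * (real k ^ 2 * (sech x ^ k * ln (sech x)) + 2 * real k * sech x ^ k)
          - sech x ^ 2 * (real k * (sech x ^ k * ln (sech x)) + sech x ^ k)"
        by algebra
      moreover have "\<dots> = f'' x"
        unfolding tanh_square f''_def power_add by algebra
      ultimately show ?thesis
        by simp
    qed
    show "continuous_on UNIV f''"
      unfolding f''_def[abs_def] by (intro continuous_intros; simp)
    show "decays_quadratically (\<lambda>x. sech x ^ k * ln (sech x))" "decays_quadratically f'"
      "decays_quadratically f''"
      unfolding f'_def[abs_def] f''_def[abs_def] using assms
      by (intro decays_quadratically_minus decays_quadratically_add decays_quadratically_diff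
          decays_quadratically_cmult decays_quadratically_mult_bounded(1)[OF _ abs_tanh_le_one]
          decays_quadratically_sech_power; simp)+
  qed
  moreover have "(LBINT x. f'' x * cos x) = real k ^ 2 * q_int k - real k * (real k + 1) * q_int (k + 2)
    + 2 * real k * p_int k - (2 * real k + 1) * p_int (k + 2)"
  proof -
    have "(\<lambda>x. f'' x * cos x) = (\<lambda>x. real k ^ 2 * (sech x ^ k * ln (sech x) * cos x)
        - real k * (real k + 1) * (sech x ^ (k + 2) * ln (sech x) * cos x)
        + 2 * real k * (sech x ^ k * cos x) - (2 * real k + 1) * (sech x ^ (k + 2) * cos x))"
      by (simp add: f''_def fun_eq_iff algebra_simps)
    then show ?thesis
      using integrable_sech_power_cos[of k] integrable_sech_power_cos[of "k + 2"] assms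
      by (simp add: p_int_def q_int_def)
  qed
  ultimately show ?thesis
    by (simp add: q_int_def algebra_simps)
qed

theorem lemma3p2:
  shows "q_int 3 = q_int 1 - 1/2 * p_int 1 \<and>
         q_int 5 = 5/6 * q_int 1 - 29/72 * p_int 1 \<and>
         q_int 7 = 13/18 * q_int 1 - 121/360 * p_int 1"
proof -
  have "p_int 3 = p_int 1" "6 * p_int 5 = 5 * p_int 3" "15 * p_int 7 = 13 * p_int 5"
    using p_int_recurrence[of 1] p_int_recurrence[of 3] p_int_recurrence[of 5]
    by (simp_all add: numeral_eq_Suc)
  moreover have "2 * q_int 1 + 2 * p_int 1 = 2 * q_int 3 + 3 * p_int 3"
    "10 * q_int 3 + 6 * p_int 3 = 12 * q_int 5 + 7 * p_int 5"
    "26 * q_int 5 + 10 * p_int 5 = 30 * q_int 7 + 11 * p_int 7"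
    using q_int_recurrence[of 1] q_int_recurrence[of 3] q_int_recurrence[of 5]
    by (simp_all add: numeral_eq_Suc)
  ultimately show ?thesis
    by linarith
qed

end
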